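(* Let $H$ be a finite abelian group and $k$ a positive integer. Suppose that for infinitely many primes $p$, every non-zero sum subset of size $k$ of $(\mathbb{Z}_p \times H) \setminus \{0_{\mathbb{Z}_p\times H}\}$ is sequenceable. Then for every torsion-free abelian group $G$, every non-zero sum subset of size $k$ of $(G \times H) \setminus \{0_{G\times H}\}$ is sequenceable.
   Context: For a finite subset $S$ of an abelian group with $|S| = k$, an ordering $(x_1,\dots,x_k)$ of $S$ has partial sums $(y_0,\dots,y_k)$ with $y_0 = 0$, $y_i = x_1+\cdots+x_i$. It is a sequencing if the $y_i$ are pairwise distinct, and a rotational sequencing if they are pairwise distinct except that $y_k = y_0 = 0$; $S$ is sequenceable if it has one or the other. $S$ is non-zero sum if the sum of its elements is nonzero. *)

theory Defs
  imports "HOL-Computational_Algebra.Primes"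
begin

(* Abelian groups are given here by an addition operation add and a neutral element z,
   so that both Z_p x H (p varying) and G x H can be treated uniformly. *)

definition psum :: "('a \<Rightarrow> 'a \<Rightarrow> 'a) \<Rightarrow> 'a \<Rightarrow> 'a list \<Rightarrow> nat \<Rightarrow> 'a" where
  "psum add z xs i = foldl add z (take i xs)"

definition is_sequencing :: "('a \<Rightarrow> 'a \<Rightarrow> 'a) \<Rightarrow> 'a \<Rightarrow> 'a list \<Rightarrow> bool" where
  "is_sequencing add z xs \<longleftrightarrow> distinct (map (psum add z xs) [0..<Suc (length xs)])"

definition is_rot_sequencing :: "('a \<Rightarrow> 'a \<Rightarrow> 'a) \<Rightarrow> 'a \<Rightarrow> 'a list \<Rightarrow> bool" where
  "is_rot_sequencing add z xs \<longleftrightarrow>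
     distinct (map (psum add z xs) [0..<length xs]) \<and> psum add z xs (length xs) = z"

definition sequenceable :: "('a \<Rightarrow> 'a \<Rightarrow> 'a) \<Rightarrow> 'a \<Rightarrow> 'a set \<Rightarrow> bool" where
  "sequenceable add z S \<longleftrightarrow>
     (\<exists>xs. distinct xs \<and> set xs = S \<and> (is_sequencing add z xs \<or> is_rot_sequencing add z xs))"

(* sum of the elements of S (computed along some listing of S; all listings agree
   in an abelian group) is non-zero *)
definition nonzero_sum :: "('a \<Rightarrow> 'a \<Rightarrow> 'a) \<Rightarrow> 'a \<Rightarrow> 'a set \<Rightarrow> bool" where
  "nonzero_sum add z S \<longleftrightarrow> (\<exists>xs. distinct xs \<and> set xs = S \<and> foldl add z xs \<noteq> z)"

(* the group Z_p x H, with Z_p represented by {0..<p} *)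
definition zp_add :: "nat \<Rightarrow> nat \<times> 'h::ab_group_add \<Rightarrow> nat \<times> 'h \<Rightarrow> nat \<times> 'h" where
  "zp_add p u v = ((fst u + fst v) mod p, snd u + snd v)"

definition prod_add :: "'g::ab_group_add \<times> 'h::ab_group_add \<Rightarrow> 'g \<times> 'h \<Rightarrow> 'g \<times> 'h" where
  "prod_add u v = (fst u + fst v, snd u + snd v)"

definition torsion_free :: "'g::ab_group_add itself \<Rightarrow> bool" where
  "torsion_free _ \<longleftrightarrow> (\<forall>x::'g. \<forall>n::nat. 0 < n \<longrightarrow> (\<Sum>i<n. x) = 0 \<longrightarrow> x = 0)"

end

theory Submission
  imports Defs "HOL-Algebra.Group" HOL.Modules "HOL-Library.Product_Plus" "HOL-Library.Infinite_Set"
begin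

(* The first coordinates of S generate a finitely generated torsion-free subgroup B of G.
   Adding one generator at a time, one builds an additive F : B -> Z that vanishes at no nonzero
   difference of first coordinates of S \<union> {0, \<Sum>S}. For every p exceeding all these |F d|,
   u \<mapsto> (F (fst u) mod p, snd u) is additive on B \<times> H and injective on S \<union> {0, \<Sum>S}, so it maps S
   to a nonzero-sum subset of (Z_p \<times> H) - {0} of the same size. A sequencing of the image pulls
   back to a sequencing of S; a rotational sequencing cannot occur because its sum would be 0. *)

definition additive_group :: "'a::ab_group_add monoid" where
  "additive_group = \<lparr>carrier = UNIV, mult = (+), one = 0\<rparr>"

lemma additive_group_simps [simp]:
  "carrier additive_group = UNIV" "x \<otimes>\<^bsub>additive_group\<^esub> y = x + y" "\<one>\<^bsub>additive_group\<^esub> = 0"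
  by (simp_all add: additive_group_def)

lemma comm_group_additive_group: "comm_group additive_group"
  by (rule comm_groupI) (auto simp: add.assoc add.commute intro: exI[of _ "- x" for x])

definition int_scale :: "int \<Rightarrow> 'a::ab_group_add \<Rightarrow> 'a" where
  "int_scale k x = x [^]\<^bsub>additive_group\<^esub> k"

(* Every abelian group is a Z-module, so int_span X is the subgroup generated by X. *)
global_interpretation int_module: module int_scale
  defines int_span = int_module.span
proof -
  interpret comm_group "additive_group :: 'a::ab_group_add monoid"
    by (rule comm_group_additive_group)
  show "module (int_scale :: int \<Rightarrow> 'a \<Rightarrow> 'a)"
  proof
    show "int_scale a (x + y) = int_scale a x + int_scale a y" for a and x y :: 'a
      using int_pow_distrib[of x y a] by (simp add: int_scale_def)
  qed (simp_all add: int_scale_def int_pow_mult int_pow_pow mult.commute)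
qed

lemma int_scale_of_nat: "int_scale (int n) x = (\<Sum>i<n. x)"
  unfolding int_scale_def int_pow_int by (induct n) simp_all

lemma torsion_free_int_scale_eq_0:
  assumes "torsion_free TYPE('a::ab_group_add)" "k \<noteq> 0" "int_scale k x = 0"
  shows "x = (0::'a)"
proof -
  define m where "m = nat \<bar>k\<bar>"
  have "int_scale (int m) x = 0"
    using assms(3) int_module.scale_minus_left[of k x] by (cases "k \<ge> 0") (simp_all add: m_def)
  moreover have "0 < m"
    using assms(2) by (simp add: m_def)
  ultimately show ?thesis
    using assms(1) by (simp add: torsion_free_def int_scale_of_nat)
qed

definition additive_on :: "'a::ab_group_add set \<Rightarrow> ('a \<Rightarrow> 'b::ab_group_add) \<Rightarrow> bool" where
  "additive_on A f \<longleftrightarrow> (\<forall>x\<in>A. \<forall>y\<in>A. f (x + y) = f x + f y)"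

lemma additive_on_int_span_zero: "additive_on (int_span X) f \<Longrightarrow> f 0 = 0"
  unfolding additive_on_def using int_module.span_zero[of X] by fastforce

lemma additive_on_int_span_diff:
  assumes "additive_on (int_span X) f" "x \<in> int_span X" "y \<in> int_span X"
  shows "f (x - y) = f x - f y"
  using assms int_module.span_diff[of x X y] unfolding additive_on_def
  by (metis add_diff_cancel diff_add_cancel)

lemma separating_hom_insert_dependent:
  fixes g :: "'a::ab_group_add"
  assumes tf: "torsion_free TYPE('a)" and n: "n \<noteq> 0" "int_scale n g \<in> int_span Y"
    and IH: "\<And>D. finite D \<Longrightarrow> D \<subseteq> int_span Y \<Longrightarrow> 0 \<notin> D \<Longrightarrow>
               \<exists>F::'a \<Rightarrow> int. additive_on (int_span Y) F \<and> (\<forall>d\<in>D. F d \<noteq> 0)"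
    and D: "finite D" "D \<subseteq> int_span (insert g Y)" "0 \<notin> D"
  shows "\<exists>F::'a \<Rightarrow> int. additive_on (int_span (insert g Y)) F \<and> (\<forall>d\<in>D. F d \<noteq> 0)"
proof -
  (* x \<mapsto> F (n x) works: multiplication by n maps the larger span into int_span Y and,
     G being torsion-free, keeps D away from 0. *)
  have scaled: "int_scale n x \<in> int_span Y" if "x \<in> int_span (insert g Y)" for x
  proof -
    from that obtain k where "x - int_scale k g \<in> int_span Y"
      by (auto simp: int_module.span_breakdown_eq)
    then have "int_scale n (x - int_scale k g) + int_scale k (int_scale n g) \<in> int_span Y"
      using n by (blast intro: int_module.span_add int_module.span_scale)
    then show ?thesis
      by (simp add: int_module.scale_right_diff_distrib mult.commute)
  qed
  have "0 \<notin> int_scale n ` D"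
    using D(3) torsion_free_int_scale_eq_0[OF tf n(1)] by force
  moreover have "int_scale n ` D \<subseteq> int_span Y"
    using D(2) scaled by blast
  ultimately obtain F :: "'a \<Rightarrow> int" where F: "additive_on (int_span Y) F" "\<forall>d\<in>D. F (int_scale n d) \<noteq> 0"
    using IH[of "int_scale n ` D"] D(1) by auto
  have "additive_on (int_span (insert g Y)) (\<lambda>x. F (int_scale n x))"
    using F(1) scaled unfolding additive_on_def by (simp add: int_module.scale_right_distrib)
  with F(2) show ?thesis by blast
qed

lemma separating_hom_insert_independent:
  fixes g :: "'a::ab_group_add"
  assumes indep: "\<And>k. int_scale k g \<in> int_span Y \<Longrightarrow> k = 0"
    and IH: "\<And>D. finite D \<Longrightarrow> D \<subseteq> int_span Y \<Longrightarrow> 0 \<notin> D \<Longrightarrow>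
               \<exists>F::'a \<Rightarrow> int. additive_on (int_span Y) F \<and> (\<forall>d\<in>D. F d \<noteq> 0)"
    and D: "finite D" "D \<subseteq> int_span (insert g Y)" "0 \<notin> D"
  shows "\<exists>F::'a \<Rightarrow> int. additive_on (int_span (insert g Y)) F \<and> (\<forall>d\<in>D. F d \<noteq> 0)"
proof -
  (* Each x in the larger span is uniquely b x + c x g with b x \<in> int_span Y; the new map is
     F (b x) + t c x, with t avoiding the finitely many values that would make it vanish on D. *)
  define c where "c x = (THE k. x - int_scale k g \<in> int_span Y)" for x
  define b where "b x = x - int_scale (c x) g" for x
  have c_eq: "c x = k" if "x - int_scale k g \<in> int_span Y" for x k
  proof -
    have "int_scale (k' - k) g \<in> int_span Y" if "x - int_scale k' g \<in> int_span Y" for k'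
      using int_module.span_diff[OF \<open>x - int_scale k g \<in> int_span Y\<close> that]
      by (simp add: int_module.scale_left_diff_distrib)
    then show ?thesis
      unfolding c_def using that indep by (intro the_equality) fastforce+
  qed
  have b: "b x \<in> int_span Y" if "x \<in> int_span (insert g Y)" for x
    using that c_eq unfolding b_def by (auto simp: int_module.span_breakdown_eq)
  have c_add: "c (x + y) = c x + c y"
    if "x \<in> int_span (insert g Y)" "y \<in> int_span (insert g Y)" for x y
  proof -
    have "x + y - int_scale (c x + c y) g = b x + b y"
      by (simp add: b_def int_module.scale_left_distrib)
    then show ?thesis
      using b[OF that(1)] b[OF that(2)] int_module.span_add c_eq by metis
  qed
  have b_add: "b (x + y) = b x + b y"
    if "x \<in> int_span (insert g Y)" "y \<in> int_span (insert g Y)" for x y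
    using c_add[OF that] by (simp add: b_def int_module.scale_left_distrib)
  obtain F :: "'a \<Rightarrow> int" where F: "additive_on (int_span Y) F" "\<forall>d\<in>b ` D - {0}. F d \<noteq> 0"
    using IH[of "b ` D - {0}"] D b by blast
  obtain t :: int where t: "t \<notin> (\<lambda>d. - F (b d) div c d) ` D"
    using ex_new_if_finite[OF infinite_UNIV_int] D(1) by blast
  define F' where "F' x = F (b x) + t * c x" for x
  have "additive_on (int_span (insert g Y)) F'"
    using F(1) b b_add c_add unfolding additive_on_def F'_def by (simp add: algebra_simps)
  moreover have "F' d \<noteq> 0" if "d \<in> D" for d
  proof (cases "c d = 0")
    case True
    then have "b d = d"
      by (simp add: b_def)
    then have "b d \<in> b ` D - {0}"
      using D(3) that by force
    then show ?thesis
      using F(2) True by (simp add: F'_def)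
  next
    case False
    show ?thesis
    proof
      assume "F' d = 0"
      then have "t = - F (b d) div c d"
        using False by (simp add: F'_def eq_neg_iff_add_eq_0[symmetric])
      with t that show False by blast
    qed
  qed
  ultimately show ?thesis by blast
qed

lemma torsion_free_separating_hom:
  fixes X :: "'a::ab_group_add set"
  assumes tf: "torsion_free TYPE('a)" and "finite X" "finite D" "D \<subseteq> int_span X" "0 \<notin> D"
  shows "\<exists>F::'a \<Rightarrow> int. additive_on (int_span X) F \<and> (\<forall>d\<in>D. F d \<noteq> 0)"
  using assms(2-)
proof (induction X arbitrary: D rule: finite_induct)
  case empty
  then have "D = {}"
    by auto
  then show ?case
    by (auto simp: additive_on_def intro: exI[of _ "\<lambda>_. 0"])
next
  case (insert g Y)
  show ?case
  proof (cases "\<exists>n. n \<noteq> 0 \<and> int_scale n g \<in> int_span Y")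
    case True
    then obtain n where "n \<noteq> 0" "int_scale n g \<in> int_span Y"
      by blast
    from separating_hom_insert_dependent[OF tf this insert.IH insert.prems] show ?thesis .
  next
    case False
    then have "k = 0" if "int_scale k g \<in> int_span Y" for k
      using that by blast
    from separating_hom_insert_independent[OF this insert.IH insert.prems] show ?thesis .
  qed
qed

lemma foldl_hom_on:
  assumes hom: "\<And>u v. u \<in> A \<Longrightarrow> v \<in> A \<Longrightarrow> \<phi> (add u v) = add' (\<phi> u) (\<phi> v)"
    and closed: "\<And>u v. u \<in> A \<Longrightarrow> v \<in> A \<Longrightarrow> add u v \<in> A"
    and "a \<in> A" "set xs \<subseteq> A"
  shows "foldl add' (\<phi> a) (map \<phi> xs) = \<phi> (foldl add a xs)"
  using assms(3,4)
proof (induction xs arbitrary: a)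
  case (Cons x xs)
  then have "foldl add' (\<phi> (add a x)) (map \<phi> xs) = \<phi> (foldl add (add a x) xs)"
    using closed by simp
  then show ?case
    using Cons.prems hom by simp
qed simp

lemma nonzero_sum_image:
  assumes hom: "\<And>u v. u \<in> A \<Longrightarrow> v \<in> A \<Longrightarrow> \<phi> (add u v) = add' (\<phi> u) (\<phi> v)"
    and closed: "\<And>u v. u \<in> A \<Longrightarrow> v \<in> A \<Longrightarrow> add u v \<in> A"
    and "z \<in> A" "\<phi> z = z'" "S \<subseteq> A" "finite S" "inj_on \<phi> S"
    and image_sum: "\<And>xs. distinct xs \<Longrightarrow> set xs = S \<Longrightarrow> \<phi> (foldl add z xs) \<noteq> z'"
  shows "nonzero_sum add' z' (\<phi> ` S)"
proof -
  obtain xs where xs: "distinct xs" "set xs = S"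
    using finite_distinct_list[OF assms(6)] by blast
  have "foldl add' z' (map \<phi> xs) = \<phi> (foldl add z xs)"
    using foldl_hom_on[of A \<phi> add add' z xs, OF hom closed assms(3)] assms(4,5) xs(2) by simp
  with xs assms(7) image_sum show ?thesis
    unfolding nonzero_sum_def by (intro exI[of _ "map \<phi> xs"]) (simp add: distinct_map)
qed

lemma sequenceable_if_sequenceable_image:
  assumes hom: "\<And>u v. u \<in> A \<Longrightarrow> v \<in> A \<Longrightarrow> \<phi> (add u v) = add' (\<phi> u) (\<phi> v)"
    and closed: "\<And>u v. u \<in> A \<Longrightarrow> v \<in> A \<Longrightarrow> add u v \<in> A"
    and "z \<in> A" "\<phi> z = z'" "S \<subseteq> A" "inj_on \<phi> S"
    and image_sum: "\<And>xs. distinct xs \<Longrightarrow> set xs = S \<Longrightarrow> \<phi> (foldl add z xs) \<noteq> z'"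
    and "sequenceable add' z' (\<phi> ` S)"
  shows "sequenceable add z S"
proof -
  obtain ys where ys: "distinct ys" "set ys = \<phi> ` S"
    and seq: "is_sequencing add' z' ys \<or> is_rot_sequencing add' z' ys"
    using assms(8) unfolding sequenceable_def by blast
  define xs where "xs = map (inv_into S \<phi>) ys"
  have "map \<phi> xs = ys"
    unfolding xs_def map_map using ys(2) by (intro map_idI) (auto simp: f_inv_into_f)
  note ys_eq = this[symmetric]
  have xs: "set xs = S" "distinct xs"
    using ys assms(6) by (simp_all add: xs_def inv_into_image_cancel distinct_map inj_on_inv_into)
  have psum: "psum add' z' ys i = \<phi> (psum add z xs i)" for i
  proof -
    have "set (take i xs) \<subseteq> A"
      using xs(1) assms(5) set_take_subset by fast
    from foldl_hom_on[of A \<phi> add add' z "take i xs", OF hom closed assms(3) this]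
    show ?thesis
      unfolding psum_def ys_eq take_map assms(4) .
  qed
  have "is_sequencing add z xs"
  proof (cases "is_sequencing add' z' ys")
    case True
    have "map (psum add' z' ys) [0..<Suc (length ys)] = map \<phi> (map (psum add z xs) [0..<Suc (length xs)])"
      using psum by (simp add: ys_eq)
    with True show ?thesis
      unfolding is_sequencing_def by (metis distinct_map)
  next
    case False
    then have "psum add' z' ys (length ys) = z'"
      using seq unfolding is_rot_sequencing_def by blast
    moreover have "psum add' z' ys (length ys) = \<phi> (foldl add z xs)"
      using psum[of "length ys"] by (simp add: psum_def ys_eq)
    ultimately show ?thesis
      using image_sum[OF xs(2,1)] by simp
  qed
  with xs show ?thesis
    unfolding sequenceable_def by blast
qed

definition reduce_mod :: "nat \<Rightarrow> ('g \<Rightarrow> int) \<Rightarrow> 'g \<times> 'h \<Rightarrow> nat \<times> 'h" where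
  "reduce_mod p F u = (nat (F (fst u) mod int p), snd u)"

lemma nat_mod_add:
  assumes "0 < p"
  shows "nat ((x + y) mod int p) = (nat (x mod int p) + nat (y mod int p)) mod p"
proof -
  have "int ((nat (x mod int p) + nat (y mod int p)) mod p) = (x + y) mod int p"
    using assms by (simp add: of_nat_mod mod_add_eq)
  then show ?thesis
    by (metis nat_int)
qed

lemma reduce_mod_prod_add:
  assumes "0 < p" "additive_on B F" "fst u \<in> B" "fst v \<in> B"
  shows "reduce_mod p F (prod_add u v) = zp_add p (reduce_mod p F u) (reduce_mod p F v)"
  using assms nat_mod_add by (simp add: reduce_mod_def prod_add_def zp_add_def additive_on_def)

lemma inj_on_reduce_mod:
  assumes F: "additive_on (int_span X) F" and T: "fst ` T \<subseteq> int_span X"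
    and small: "\<And>u v. u \<in> T \<Longrightarrow> v \<in> T \<Longrightarrow> fst u \<noteq> fst v \<Longrightarrow>
                  F (fst u - fst v) \<noteq> 0 \<and> \<bar>F (fst u - fst v)\<bar> < int p"
  shows "inj_on (reduce_mod p F) T"
proof
  fix u v assume uv: "u \<in> T" "v \<in> T" "reduce_mod p F u = reduce_mod p F v"
  have "fst u = fst v"
  proof (rule ccontr)
    assume "fst u \<noteq> fst v"
    note small = small[OF uv(1,2) this]
    then have "0 < p"
      by linarith
    with uv(3) have "F (fst u) mod int p = F (fst v) mod int p"
      by (simp add: reduce_mod_def eq_nat_nat_iff)
    then have "int p dvd F (fst u - fst v)"
      using additive_on_int_span_diff[OF F] T uv(1,2) by (simp add: mod_eq_dvd_iff image_subset_iff)
    with small show False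
      using dvd_imp_le_int[of "F (fst u - fst v)" "int p"] by simp
  qed
  with uv(3) show "u = v"
    by (simp add: reduce_mod_def prod_eq_iff)
qed

lemma exists_reduce_mod_inj_on:
  fixes T :: "('g::ab_group_add \<times> 'h) set"
  assumes tf: "torsion_free TYPE('g)" and "finite T"
  obtains F M where "additive_on (int_span (fst ` T)) F" "\<And>p. M < p \<Longrightarrow> inj_on (reduce_mod p F) T"
proof -
  define D where "D = (\<lambda>(u, v). fst u - fst v) ` (T \<times> T) - {0}"
  have "fst u - fst v \<in> int_span (fst ` T)" if "u \<in> T" "v \<in> T" for u v
    using that by (simp add: int_module.span_diff int_module.span_base)
  then have "D \<subseteq> int_span (fst ` T)"
    by (auto simp: D_def)
  moreover have "finite D" "0 \<notin> D"
    using \<open>finite T\<close> by (simp_all add: D_def)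
  ultimately obtain F :: "'g \<Rightarrow> int" where F: "additive_on (int_span (fst ` T)) F" "\<forall>d\<in>D. F d \<noteq> 0"
    using torsion_free_separating_hom[OF tf finite_imageI[OF \<open>finite T\<close>]] by blast
  define M where "M = Max ((\<lambda>d. nat \<bar>F d\<bar>) ` D)"
  have "inj_on (reduce_mod p F) T" if "M < p" for p
  proof (rule inj_on_reduce_mod[OF F(1) int_module.span_superset])
    fix u v assume "u \<in> T" "v \<in> T" "fst u \<noteq> fst v"
    then have d: "fst u - fst v \<in> D"
      by (force simp: D_def)
    then have "nat \<bar>F (fst u - fst v)\<bar> \<le> M"
      unfolding M_def using \<open>finite D\<close> by simp
    with d F(2) \<open>M < p\<close> show "F (fst u - fst v) \<noteq> 0 \<and> \<bar>F (fst u - fst v)\<bar> < int p"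
      by auto
  qed
  with F(1) that show thesis
    by blast
qed

lemma foldl_plus: "foldl (+) a xs = a + sum_list (xs :: 'a::monoid_add list)"
  by (induction xs arbitrary: a) (simp_all add: add.assoc)

lemma prod_add_eq_plus: "prod_add = (+)"
  by (simp add: fun_eq_iff prod_add_def plus_prod_def)

lemma foldl_prod_add_distinct: "distinct xs \<Longrightarrow> foldl prod_add (0, 0) xs = \<Sum>(set xs)"
  using sum.distinct_set_conv_list[of xs "\<lambda>x. x"]
  by (simp add: prod_add_eq_plus foldl_plus flip: zero_prod_def)

lemma nonzero_sum_prod_add_iff:
  assumes "finite S"
  shows "nonzero_sum prod_add (0, 0) S \<longleftrightarrow> \<Sum>S \<noteq> 0"
proof -
  have "nonzero_sum prod_add (0, 0) S \<longleftrightarrow> (\<exists>xs. distinct xs \<and> set xs = S) \<and> \<Sum>S \<noteq> 0"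
    unfolding nonzero_sum_def zero_prod_def by (auto simp: foldl_prod_add_distinct)
  with finite_distinct_list[OF assms] show ?thesis
    by blast
qed

lemma reduce_mod_image:
  fixes S :: "('g::ab_group_add \<times> 'h::ab_group_add) set"
  assumes "0 < p" "finite S" "(0, 0) \<notin> S" "nonzero_sum prod_add (0, 0) S"
    and F: "additive_on (int_span X) F" "fst ` S \<subseteq> int_span X"
    and inj: "inj_on (reduce_mod p F) (insert (0, 0) (insert (\<Sum>S) S))"
  shows "reduce_mod p F ` S \<subseteq> {0..<p} \<times> UNIV - {(0, 0)} \<and> card (reduce_mod p F ` S) = card S
    \<and> nonzero_sum (zp_add p) (0, 0) (reduce_mod p F ` S)
    \<and> (sequenceable (zp_add p) (0, 0) (reduce_mod p F ` S) \<longrightarrow> sequenceable prod_add (0, 0) S)"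
proof -
  let ?\<phi> = "reduce_mod p F :: 'g \<times> 'h \<Rightarrow> nat \<times> 'h"
  define A :: "('g \<times> 'h) set" where "A = {u. fst u \<in> int_span X}"
  have hom: "?\<phi> (prod_add u v) = zp_add p (?\<phi> u) (?\<phi> v)" if "u \<in> A" "v \<in> A" for u v
    using reduce_mod_prod_add[OF \<open>0 < p\<close> F(1)] that by (simp add: A_def)
  have closed: "prod_add u v \<in> A" if "u \<in> A" "v \<in> A" for u v
    using that by (simp add: A_def prod_add_def int_module.span_add)
  have A: "(0, 0) \<in> A" "S \<subseteq> A"
    using F(2) by (auto simp: A_def int_module.span_zero)
  have \<phi>0: "?\<phi> (0, 0) = (0, 0)"
    using additive_on_int_span_zero[OF F(1)] by (simp add: reduce_mod_def)
  have "\<Sum>S \<noteq> (0, 0)"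
    using assms(2,4) by (simp add: nonzero_sum_prod_add_iff zero_prod_def)
  then have "?\<phi> (\<Sum>S) \<noteq> (0, 0)"
    using inj_on_contraD[OF inj \<open>\<Sum>S \<noteq> (0, 0)\<close>] \<phi>0 by simp
  then have image_sum: "?\<phi> (foldl prod_add (0, 0) xs) \<noteq> (0, 0)" if "distinct xs" "set xs = S" for xs
    using that by (simp add: foldl_prod_add_distinct)
  have inj_S: "inj_on ?\<phi> S"
    using inj by (rule inj_on_subset) blast
  have "?\<phi> u \<noteq> (0, 0)" if "u \<in> S" for u
    using inj_on_contraD[OF inj, of u "(0, 0)"] \<phi>0 that assms(3) by auto
  then have "?\<phi> ` S \<subseteq> {0..<p} \<times> UNIV - {(0, 0)}"
    using \<open>0 < p\<close> by (auto simp: reduce_mod_def nat_less_iff)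
  moreover have "nonzero_sum (zp_add p) (0, 0) (?\<phi> ` S)"
    using nonzero_sum_image[of A ?\<phi> prod_add "zp_add p", OF hom closed A(1) \<phi>0 A(2) assms(2)
        inj_S image_sum] .
  moreover have "card (?\<phi> ` S) = card S"
    using inj_S by (rule card_image)
  moreover have "sequenceable prod_add (0, 0) S" if "sequenceable (zp_add p) (0, 0) (?\<phi> ` S)"
    using sequenceable_if_sequenceable_image[of A ?\<phi> prod_add "zp_add p", OF hom closed A(1) \<phi>0 A(2)
        inj_S image_sum that] .
  ultimately show ?thesis
    by simp
qed

lemma sequenceable_if_infinitely_many_reductions:
  fixes S :: "('g::ab_group_add \<times> 'h::ab_group_add) set"
  assumes tf: "torsion_free TYPE('g)" and S: "finite S" "(0, 0) \<notin> S" "nonzero_sum prod_add (0, 0) S"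
    and "infinite {p. \<forall>S'. S' \<subseteq> {0..<p} \<times> (UNIV :: 'h set) - {(0, 0)} \<and> card S' = card S
                \<and> nonzero_sum (zp_add p) (0, 0) S' \<longrightarrow> sequenceable (zp_add p) (0, 0) S'}"
      (is "infinite ?good")
  shows "sequenceable prod_add (0, 0) S"
proof -
  define T where "T = insert (0, 0) (insert (\<Sum>S) S)"
  obtain F M where F: "additive_on (int_span (fst ` T)) F"
    and inj: "\<And>p. M < p \<Longrightarrow> inj_on (reduce_mod p F) T"
    using exists_reduce_mod_inj_on[OF tf, of T] S(1) unfolding T_def by blast
  have fst_S: "fst ` S \<subseteq> int_span (fst ` T)"
    unfolding T_def by (auto intro: int_module.span_base)
  obtain p where p: "M < p" "p \<in> ?good"
    using assms(5) unfolding infinite_nat_iff_unbounded by blast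
  then have "0 < p"
    by simp
  from reduce_mod_image[OF this S F fst_S inj[OF p(1), unfolded T_def]] p(2)
  show ?thesis
    by simp
qed

theorem corollary4p5:
  fixes k :: nat
  assumes "0 < k"
    and "infinite {p::nat. prime p \<and>
           (\<forall>S. S \<subseteq> ({0..<p} \<times> (UNIV :: ('h::{finite,ab_group_add}) set)) - {(0, 0)}
                 \<and> card S = k \<and> nonzero_sum (zp_add p) (0, 0) S
                 \<longrightarrow> sequenceable (zp_add p) (0, 0) S)}"
    and "torsion_free TYPE('g::ab_group_add)"
  shows "\<forall>S. S \<subseteq> (UNIV :: ('g \<times> 'h) set) - {(0, 0)} \<and> finite S \<and> card S = k
               \<and> nonzero_sum prod_add (0, 0) S
             \<longrightarrow> sequenceable prod_add (0, 0) S"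
proof (intro allI impI, elim conjE)
  fix S :: "('g \<times> 'h) set"
  assume S: "S \<subseteq> UNIV - {(0, 0)}" "finite S" "card S = k" "nonzero_sum prod_add (0, 0) S"
  have "infinite {p. \<forall>S'. S' \<subseteq> {0..<p} \<times> (UNIV :: 'h set) - {(0, 0)} \<and> card S' = card S
                \<and> nonzero_sum (zp_add p) (0, 0) S' \<longrightarrow> sequenceable (zp_add p) (0, 0) S'}"
    using assms(2) by (rule infinite_super[rotated]) (auto simp: S(3))
  moreover have "(0, 0) \<notin> S"
    using S(1) by blast
  ultimately show "sequenceable prod_add (0, 0) S"
    using sequenceable_if_infinitely_many_reductions[OF assms(3) S(2) _ S(4)] by blast
qed

end
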